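(* Let $A$ be a finite nonempty set of actions and $\boldsymbol{v}^0,\boldsymbol{v}^1,\dots\in\mathbb{R}^{|A|}$ an arbitrary sequence of value vectors. Let $\boldsymbol{s}^t$ denote either the regret-matching stored values $\boldsymbol{r}^t$ or the regret-matching$^+$ stored values $\boldsymbol{q}^t$, and $\boldsymbol{\sigma}^t$ the associated policy. Then for all $t$ and all $a\in A$, $$\bigl(s^{t+1,+}_a-s^{t,+}_a\bigr)\bigl(v^t_a-\boldsymbol{\sigma}^t\cdot\boldsymbol{v}^t\bigr)\ge 0.$$
   Context: For $x\in\mathbb{R}$, $x^+:=\max(x,0)$, applied componentwise to vectors; $s^{t,+}_a:=(s^t_a)^+$. Define $\boldsymbol{\sigma}_{\mathrm{rm}}(\boldsymbol{x}):=\boldsymbol{x}^+/(\boldsymbol{1}\cdot\boldsymbol{x}^+)$ if some $x_a>0$, and $\boldsymbol{1}/|A|$ otherwise. Regret-matching: $\boldsymbol{r}^0=\boldsymbol{0}$, $\boldsymbol{\sigma}^t=\boldsymbol{\sigma}_{\mathrm{rm}}(\boldsymbol{r}^t)$, $\boldsymbol{r}^{t+1}=\boldsymbol{r}^t+\boldsymbol{v}^t-(\boldsymbol{\sigma}^t\cdot\boldsymbol{v}^t)\boldsymbol{1}$. Regret-matching$^+$: $\boldsymbol{q}^0=\boldsymbol{0}$, $\boldsymbol{\sigma}^t=\boldsymbol{\sigma}_{\mathrm{rm}}(\boldsymbol{q}^t)$, $\boldsymbol{q}^{t+1}=\bigl(\boldsymbol{q}^t+\boldsymbol{v}^t-(\boldsymbol{\sigma}^t\cdot\boldsymbol{v}^t)\boldsymbol{1}\bigr)^+$.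 *)

theory Defs
  imports "HOL-Analysis.Analysis"
begin

text \<open>Actions form a finite nonempty type 'a; vectors in R^|A| are functions 'a => real.\<close>

definition pos :: "real \<Rightarrow> real" where "pos x = max x 0"

definition dotp :: "('a::finite \<Rightarrow> real) \<Rightarrow> ('a \<Rightarrow> real) \<Rightarrow> real" where
  "dotp x y = (\<Sum>a\<in>UNIV. x a * y a)"

definition sigma_rm :: "('a::finite \<Rightarrow> real) \<Rightarrow> ('a \<Rightarrow> real)" where
  "sigma_rm x = (if \<exists>a. x a > 0
     then (\<lambda>a. pos (x a) / (\<Sum>b\<in>UNIV. pos (x b)))
     else (\<lambda>a. 1 / real CARD('a)))"

fun rm_r :: "(nat \<Rightarrow> 'a::finite \<Rightarrow> real) \<Rightarrow> nat \<Rightarrow> 'a \<Rightarrow> real" where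
  "rm_r v 0 = (\<lambda>a. 0)"
| "rm_r v (Suc t) = (\<lambda>a. rm_r v t a + v t a - dotp (sigma_rm (rm_r v t)) (v t))"

fun rmp_q :: "(nat \<Rightarrow> 'a::finite \<Rightarrow> real) \<Rightarrow> nat \<Rightarrow> 'a \<Rightarrow> real" where
  "rmp_q v 0 = (\<lambda>a. 0)"
| "rmp_q v (Suc t) = (\<lambda>a. pos (rmp_q v t a + v t a - dotp (sigma_rm (rmp_q v t)) (v t)))"

end

theory Submission
  imports Defs
begin

text \<open>Both stored values move by the instantaneous regret: \<open>r\<^sup>t\<^sup>+\<^sup>1 = r\<^sup>t + \<delta>\<close> and
  \<open>q\<^sup>t\<^sup>+\<^sup>1 = (q\<^sup>t + \<delta>)\<^sup>+\<close> with \<open>\<delta> = v\<^sup>t\<^sub>a - \<sigma>\<^sup>t \<cdot> v\<^sup>t\<close>. Since \<open>x \<mapsto> x\<^sup>+\<close> is monotone and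
  idempotent, in both cases the positive part moves in the direction of \<open>\<delta>\<close>.\<close>

lemma pos_mono: "x \<le> y \<Longrightarrow> pos x \<le> pos y"
  unfolding pos_def by simp

lemma pos_pos [simp]: "pos (pos x) = pos x"
  unfolding pos_def by simp

lemma pos_add_diff_mult_nonneg: "(pos (x + d) - pos x) * d \<ge> 0"
proof (cases "d \<ge> 0")
  case True
  then show ?thesis by (simp add: pos_mono)
next
  case False
  then have "pos (x + d) \<le> pos x" by (simp add: pos_mono)
  with False show ?thesis by (simp add: mult_nonpos_nonpos)
qed

theorem lemma2:
  fixes v :: "nat \<Rightarrow> 'a::finite \<Rightarrow> real" and t :: nat and a :: 'a
  shows "(pos (rm_r v (Suc t) a) - pos (rm_r v t a))
            * (v t a - dotp (sigma_rm (rm_r v t)) (v t)) \<ge> 0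
       \<and> (pos (rmp_q v (Suc t) a) - pos (rmp_q v t a))
            * (v t a - dotp (sigma_rm (rmp_q v t)) (v t)) \<ge> 0"
proof
  show "(pos (rm_r v (Suc t) a) - pos (rm_r v t a))
            * (v t a - dotp (sigma_rm (rm_r v t)) (v t)) \<ge> 0"
    using pos_add_diff_mult_nonneg [of "rm_r v t a" "v t a - dotp (sigma_rm (rm_r v t)) (v t)"]
    by (simp add: add_diff_eq)
  show "(pos (rmp_q v (Suc t) a) - pos (rmp_q v t a))
            * (v t a - dotp (sigma_rm (rmp_q v t)) (v t)) \<ge> 0"
    using pos_add_diff_mult_nonneg [of "rmp_q v t a" "v t a - dotp (sigma_rm (rmp_q v t)) (v t)"]
    by (simp add: add_diff_eq)
qed

end
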